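(* Consider the simplified community network described below with $\gamma>1$. Its equilibrium points (points $\beta=(\beta_a,\beta_b)\in[0,1]^2$ with $F(\beta)=\beta$) are $\mathbf 0=(0,0)$, $\mathbf 1=(1,1)$, and, when $\max\{p_1/p_2,\,p_2/p_1\}<\gamma$, the interior point $\beta^*=(\beta_a^*,\beta_b^* )$ with $$\beta_a^*=\frac{\gamma\big((\gamma+1)p_1p_2-2p_2+\sqrt{p_1p_2}\,\Delta\big)}{(\gamma-1)\big((\gamma+1)p_1p_2+\sqrt{p_1p_2}\,\Delta\big)},\qquad \beta_b^*=\frac{2\gamma p_1-(\gamma+1)p_1p_2-\sqrt{p_1p_2}\,\Delta}{(\gamma-1)\big((\gamma+1)p_1p_2+\sqrt{p_1p_2}\,\Delta\big)},$$ where $\Delta=\sqrt{4\gamma(1-p_1-p_2)+(\gamma+1)^2p_1p_2}$.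
   Context: The simplified community network has two agents $a,b$ with normalized adjacency (transition) matrix $W=\begin{pmatrix}p_1&1-p_1\\1-p_2&p_2\end{pmatrix}$, $p_1,p_2\in[0,1)$ not both zero; equivalently the symmetric weights are $a_{a,a}=p_1(1-p_2)$, $a_{a,b}=a_{b,a}=(1-p_1)(1-p_2)$, $a_{b,b}=p_2(1-p_1)$. Agent $a$ has bias parameter $\gamma_a=\gamma>1$ and agent $b$ has bias parameter $\gamma_b=1/\gamma$. With $f(\mu,\gamma)=\frac{\gamma\mu}{1+(\gamma-1)\mu}$, $\mu_a=p_1\beta_a+(1-p_1)\beta_b$, $\mu_b=(1-p_2)\beta_a+p_2\beta_b$, the map $F$ is $F(\beta_a,\beta_b)=(f(\mu_a,\gamma),f(\mu_b,1/\gamma))$. The condition $\max\{p_1/p_2,p_2/p_1\}<\gamma$ is understood to fail if $p_1=0$ or $p_2=0$. *)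

theory Defs
  imports Complex_Main
begin

definition fbias :: "real \<Rightarrow> real \<Rightarrow> real" where
  "fbias \<mu> \<gamma> = \<gamma> * \<mu> / (1 + (\<gamma> - 1) * \<mu>)"

definition Fnet :: "real \<Rightarrow> real \<Rightarrow> real \<Rightarrow> real \<times> real \<Rightarrow> real \<times> real" where
  "Fnet p1 p2 \<gamma> \<beta> =
     (let \<mu>a = p1 * fst \<beta> + (1 - p1) * snd \<beta>;
          \<mu>b = (1 - p2) * fst \<beta> + p2 * snd \<beta>
      in (fbias \<mu>a \<gamma>, fbias \<mu>b (1 / \<gamma>)))"

definition interior_cond :: "real \<Rightarrow> real \<Rightarrow> real \<Rightarrow> bool" where
  "interior_cond p1 p2 \<gamma> \<longleftrightarrow> p1 \<noteq> 0 \<and> p2 \<noteq> 0 \<and> max (p1 / p2) (p2 / p1) < \<gamma>"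

definition Delta :: "real \<Rightarrow> real \<Rightarrow> real \<Rightarrow> real" where
  "Delta p1 p2 \<gamma> = sqrt (4 * \<gamma> * (1 - p1 - p2) + (\<gamma> + 1)^2 * p1 * p2)"

definition beta_star :: "real \<Rightarrow> real \<Rightarrow> real \<Rightarrow> real \<times> real" where
  "beta_star p1 p2 \<gamma> =
     (let D = Delta p1 p2 \<gamma>; s = sqrt (p1 * p2);
          den = (\<gamma> - 1) * ((\<gamma> + 1) * p1 * p2 + s * D)
      in (\<gamma> * ((\<gamma> + 1) * p1 * p2 - 2 * p2 + s * D) / den,
          (2 * \<gamma> * p1 - (\<gamma> + 1) * p1 * p2 - s * D) / den))"

end

theory Submission
  imports Defs
begin

(* In the coordinates a = gamma - (gamma - 1) x and b = 1 + (gamma - 1) y of a point (x, y) of the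
   square, which range over [1, gamma], the fixed-point equations become
     gamma - a b + p1 a (a + b - gamma - 1) = 0   and   gamma - a b + p2 b (a + b - gamma - 1) = 0.
   Their difference factors as (p1 a - p2 b)(a + b - gamma - 1).  Together with the first equation,
   a + b = gamma + 1 forces {a, b} = {1, gamma}, i.e. the fixed points 0 and 1; so every other fixed
   point has p1 a = p2 b.  Writing a = 2 gamma p2 / E and b = 2 gamma p1 / E, both equations reduce to
   the quadratic (E - (gamma + 1) p1 p2)^2 = p1 p2 Delta^2.  The constraint 1 < a, b < gamma reads
   2 max(p1, p2) < E < 2 gamma min(p1, p2), which is exactly the condition max(p1/p2, p2/p1) < gamma;
   and since the quadratic is negative at E = 2 p1, it selects the larger root, which gives beta*. *)

lemma power2_eq_imp_eq_plus_sqrt: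
  fixes e m d t :: real
  assumes "(e - m)\<^sup>2 = d" "(t - m)\<^sup>2 < d" "t < e"
  shows "e = m + sqrt d"
proof -
  have "\<bar>e - m\<bar> = sqrt d" "\<bar>t - m\<bar> < sqrt d"
    using assms(1,2) real_sqrt_less_mono[OF assms(2)] by auto
  then show ?thesis
    using assms(3) by (auto simp: abs_if split: if_splits)
qed

lemma plus_sqrt_between:
  fixes m d t0 t1 :: real
  assumes "(t0 - m)\<^sup>2 < d" "d < (t1 - m)\<^sup>2" "t0 < t1"
  shows "t0 < m + sqrt d" "m + sqrt d < t1"
proof -
  have "\<bar>t0 - m\<bar> < sqrt d" "sqrt d < \<bar>t1 - m\<bar>"
    using real_sqrt_less_mono[OF assms(1)] real_sqrt_less_mono[OF assms(2)] by auto
  then show "t0 < m + sqrt d" "m + sqrt d < t1"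
    using assms(3) by (auto simp: abs_if split: if_splits)
qed

lemma fbias_eq_iff:
  fixes \<mu> \<gamma> x :: real
  assumes "0 \<le> \<mu>" "\<mu> \<le> 1" "0 < \<gamma>"
  shows "fbias \<mu> \<gamma> = x \<longleftrightarrow> x * (1 + (\<gamma> - 1) * \<mu>) = \<gamma> * \<mu>"
proof -
  have "1 + (\<gamma> - 1) * \<mu> = (1 - \<mu>) + \<gamma> * \<mu>" by algebra
  also have "\<dots> > 0"
    using assms by (cases "\<mu> = 1") (auto intro: add_pos_nonneg)
  finally show ?thesis
    unfolding fbias_def by (auto simp: field_simps)
qed

definition net_fixed_eqs :: "real \<Rightarrow> real \<Rightarrow> real \<Rightarrow> real \<Rightarrow> real \<Rightarrow> bool" where
  "net_fixed_eqs p1 p2 \<gamma> a b \<longleftrightarrow>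
     \<gamma> - a * b + p1 * a * (a + b - \<gamma> - 1) = 0 \<and> \<gamma> - a * b + p2 * b * (a + b - \<gamma> - 1) = 0"

lemma Fnet_fixed_iff:
  fixes p1 p2 \<gamma> x y :: real
  assumes "0 \<le> p1" "p1 \<le> 1" "0 \<le> p2" "p2 \<le> 1" "1 < \<gamma>" "x \<in> {0..1}" "y \<in> {0..1}"
  shows "Fnet p1 p2 \<gamma> (x, y) = (x, y) \<longleftrightarrow>
    net_fixed_eqs p1 p2 \<gamma> (\<gamma> - (\<gamma> - 1) * x) (1 + (\<gamma> - 1) * y)"
    (is "_ \<longleftrightarrow> net_fixed_eqs _ _ _ ?a ?b")
proof -
  define \<mu>a where "\<mu>a = p1 * x + (1 - p1) * y"
  define \<mu>b where "\<mu>b = (1 - p2) * x + p2 * y"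
  have "\<mu>a \<le> p1 * 1 + (1 - p1) * 1" "\<mu>b \<le> (1 - p2) * 1 + p2 * 1"
    unfolding \<mu>a_def \<mu>b_def using assms by (intro add_mono mult_left_mono; simp)+
  moreover have "0 \<le> \<mu>a" "0 \<le> \<mu>b"
    unfolding \<mu>a_def \<mu>b_def using assms by auto
  ultimately have \<mu>: "\<mu>a \<in> {0..1}" "\<mu>b \<in> {0..1}" by auto
  have e1: "(\<gamma> - 1) * (x * (1 + (\<gamma> - 1) * \<mu>a) - \<gamma> * \<mu>a) =
      \<gamma> - ?a * ?b + p1 * ?a * (?a + ?b - \<gamma> - 1)"
    unfolding \<mu>a_def by algebra
  have e2: "(\<gamma> - 1) * (y * (\<gamma> - (\<gamma> - 1) * \<mu>b) - \<mu>b) =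
      - (\<gamma> - ?a * ?b + p2 * ?b * (?a + ?b - \<gamma> - 1))"
    unfolding \<mu>b_def by algebra
  have "Fnet p1 p2 \<gamma> (x, y) = (x, y) \<longleftrightarrow> fbias \<mu>a \<gamma> = x \<and> fbias \<mu>b (1 / \<gamma>) = y"
    by (auto simp: Fnet_def \<mu>a_def \<mu>b_def)
  also have "\<dots> \<longleftrightarrow>
      x * (1 + (\<gamma> - 1) * \<mu>a) - \<gamma> * \<mu>a = 0 \<and> y * (\<gamma> - (\<gamma> - 1) * \<mu>b) - \<mu>b = 0"
    using \<mu> assms by (simp add: fbias_eq_iff field_simps)
  also have "\<dots> \<longleftrightarrow>
      (\<gamma> - 1) * (x * (1 + (\<gamma> - 1) * \<mu>a) - \<gamma> * \<mu>a) = 0 \<and>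
      (\<gamma> - 1) * (y * (\<gamma> - (\<gamma> - 1) * \<mu>b) - \<mu>b) = 0"
    using assms(5) by simp
  also have "\<dots> \<longleftrightarrow> net_fixed_eqs p1 p2 \<gamma> ?a ?b"
    unfolding e1 e2 net_fixed_eqs_def by linarith
  finally show ?thesis .
qed

lemma net_fixed_eqs_corner:
  fixes p1 p2 \<gamma> a b :: real
  assumes "net_fixed_eqs p1 p2 \<gamma> a b" "p1 < 1" "p2 < 1" "0 < \<gamma>" "a \<in> {1, \<gamma>} \<or> b \<in> {1, \<gamma>}"
  shows "(a, b) = (\<gamma>, 1) \<or> (a, b) = (1, \<gamma>)"
proof -
  have "\<gamma> - a * b + p1 * a * (a + b - \<gamma> - 1) = 0" "\<gamma> - a * b + p2 * b * (a + b - \<gamma> - 1) = 0"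
    using assms(1) unfolding net_fixed_eqs_def by auto
  moreover have "\<gamma> - \<gamma> * b + p1 * \<gamma> * (\<gamma> + b - \<gamma> - 1) = \<gamma> * (1 - b) * (1 - p1)"
    "\<gamma> - b + p1 * (1 + b - \<gamma> - 1) = (\<gamma> - b) * (1 - p1)"
    "\<gamma> - a + p2 * (a + 1 - \<gamma> - 1) = (\<gamma> - a) * (1 - p2)"
    "\<gamma> - a * \<gamma> + p2 * \<gamma> * (a + \<gamma> - \<gamma> - 1) = \<gamma> * (1 - a) * (1 - p2)"
    by algebra+
  ultimately show ?thesis
    using assms(2-5) by auto
qed

lemma net_fixed_eqs_interior_proportional:
  fixes p1 p2 \<gamma> a b :: real
  assumes "net_fixed_eqs p1 p2 \<gamma> a b" "1 < a" "a < \<gamma>"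
  shows "p1 * a = p2 * b"
proof -
  have eqs: "\<gamma> - a * b + p1 * a * (a + b - \<gamma> - 1) = 0" "\<gamma> - a * b + p2 * b * (a + b - \<gamma> - 1) = 0"
    using assms(1) unfolding net_fixed_eqs_def by auto
  have "a + b - \<gamma> - 1 \<noteq> 0"
  proof
    assume "a + b - \<gamma> - 1 = 0"
    with eqs have "(a - 1) * (a - \<gamma>) = 0"
      by algebra
    with assms(2,3) show False by simp
  qed
  moreover have "(p1 * a - p2 * b) * (a + b - \<gamma> - 1) = 0"
    using eqs by algebra
  ultimately show ?thesis by simp
qed

definition net_disc :: "real \<Rightarrow> real \<Rightarrow> real \<Rightarrow> real" where
  "net_disc p1 p2 \<gamma> = ((\<gamma> + 1) * p1 * p2)\<^sup>2 + 4 * \<gamma> * p1 * p2 * (1 - p1 - p2)"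

definition net_root :: "real \<Rightarrow> real \<Rightarrow> real \<Rightarrow> real" where
  "net_root p1 p2 \<gamma> = (\<gamma> + 1) * p1 * p2 + sqrt (net_disc p1 p2 \<gamma>)"

lemma interior_cond_iff:
  fixes p1 p2 \<gamma> :: real
  assumes "0 \<le> p1" "0 \<le> p2"
  shows "interior_cond p1 p2 \<gamma> \<longleftrightarrow> 0 < p1 \<and> 0 < p2 \<and> p1 < \<gamma> * p2 \<and> p2 < \<gamma> * p1"
  using assms by (auto simp: interior_cond_def divide_less_eq mult.commute)

lemma net_disc_bounds:
  fixes p1 p2 \<gamma> :: real
  assumes "0 \<le> p1" "p1 < 1" "0 \<le> p2" "p2 < 1" "interior_cond p1 p2 \<gamma>"
  shows "(2 * p1 - (\<gamma> + 1) * p1 * p2)\<^sup>2 < net_disc p1 p2 \<gamma>"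
    "(2 * p2 - (\<gamma> + 1) * p1 * p2)\<^sup>2 < net_disc p1 p2 \<gamma>"
    "net_disc p1 p2 \<gamma> < (2 * \<gamma> * p1 - (\<gamma> + 1) * p1 * p2)\<^sup>2"
    "net_disc p1 p2 \<gamma> < (2 * \<gamma> * p2 - (\<gamma> + 1) * p1 * p2)\<^sup>2"
proof -
  have p: "0 < p1" "0 < p2" "p1 < \<gamma> * p2" "p2 < \<gamma> * p1"
    using assms interior_cond_iff by auto
  then have "0 < \<gamma> * p2"
    by linarith
  with p(2) have "0 < \<gamma>"
    by (simp add: zero_less_mult_iff)
  with p assms(2,4) have
    "4 * p1 * (1 - p2) * (p1 - \<gamma> * p2) < 0"
    "4 * p2 * (1 - p1) * (p2 - \<gamma> * p1) < 0"
    "0 < 4 * \<gamma> * p1 * (1 - p2) * (\<gamma> * p1 - p2)"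
    "0 < 4 * \<gamma> * p2 * (1 - p1) * (\<gamma> * p2 - p1)"
    by (auto intro!: mult_pos_neg mult_pos_pos)
  moreover have
    "(2 * p1 - (\<gamma> + 1) * p1 * p2)\<^sup>2 - net_disc p1 p2 \<gamma> = 4 * p1 * (1 - p2) * (p1 - \<gamma> * p2)"
    "(2 * p2 - (\<gamma> + 1) * p1 * p2)\<^sup>2 - net_disc p1 p2 \<gamma> = 4 * p2 * (1 - p1) * (p2 - \<gamma> * p1)"
    "(2 * \<gamma> * p1 - (\<gamma> + 1) * p1 * p2)\<^sup>2 - net_disc p1 p2 \<gamma> =
      4 * \<gamma> * p1 * (1 - p2) * (\<gamma> * p1 - p2)"
    "(2 * \<gamma> * p2 - (\<gamma> + 1) * p1 * p2)\<^sup>2 - net_disc p1 p2 \<gamma> =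
      4 * \<gamma> * p2 * (1 - p1) * (\<gamma> * p2 - p1)"
    unfolding net_disc_def power2_eq_square by algebra+
  ultimately show "(2 * p1 - (\<gamma> + 1) * p1 * p2)\<^sup>2 < net_disc p1 p2 \<gamma>"
    "(2 * p2 - (\<gamma> + 1) * p1 * p2)\<^sup>2 < net_disc p1 p2 \<gamma>"
    "net_disc p1 p2 \<gamma> < (2 * \<gamma> * p1 - (\<gamma> + 1) * p1 * p2)\<^sup>2"
    "net_disc p1 p2 \<gamma> < (2 * \<gamma> * p2 - (\<gamma> + 1) * p1 * p2)\<^sup>2"
    by linarith+
qed

lemma net_root_bounds:
  fixes p1 p2 \<gamma> :: real
  assumes "0 \<le> p1" "p1 < 1" "0 \<le> p2" "p2 < 1" "interior_cond p1 p2 \<gamma>"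
  shows "2 * p1 < net_root p1 p2 \<gamma>" "2 * p2 < net_root p1 p2 \<gamma>"
    "net_root p1 p2 \<gamma> < 2 * \<gamma> * p1" "net_root p1 p2 \<gamma> < 2 * \<gamma> * p2"
proof -
  have "2 * p1 < 2 * \<gamma> * p2" "2 * p2 < 2 * \<gamma> * p1"
    using assms interior_cond_iff by auto
  then show "2 * p1 < net_root p1 p2 \<gamma>" "2 * p2 < net_root p1 p2 \<gamma>"
    "net_root p1 p2 \<gamma> < 2 * \<gamma> * p1" "net_root p1 p2 \<gamma> < 2 * \<gamma> * p2"
    unfolding net_root_def using net_disc_bounds[OF assms] plus_sqrt_between by metis+
qed

lemma net_fixed_eqs_param_iff:
  fixes p1 p2 \<gamma> E :: real
  assumes "E \<noteq> 0" "\<gamma> \<noteq> 0"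
  shows "net_fixed_eqs p1 p2 \<gamma> (2 * \<gamma> * p2 / E) (2 * \<gamma> * p1 / E) \<longleftrightarrow>
    (E - (\<gamma> + 1) * p1 * p2)\<^sup>2 = net_disc p1 p2 \<gamma>"
    (is "net_fixed_eqs _ _ _ ?a ?b \<longleftrightarrow> _")
proof -
  have "E\<^sup>2 * (\<gamma> - ?a * ?b + p1 * ?a * (?a + ?b - \<gamma> - 1)) =
      \<gamma> * ((E - (\<gamma> + 1) * p1 * p2)\<^sup>2 - net_disc p1 p2 \<gamma>)"
    "E\<^sup>2 * (\<gamma> - ?a * ?b + p2 * ?b * (?a + ?b - \<gamma> - 1)) =
      \<gamma> * ((E - (\<gamma> + 1) * p1 * p2)\<^sup>2 - net_disc p1 p2 \<gamma>)"
    using assms(1) by (simp_all add: net_disc_def field_simps power2_eq_square; algebra)+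
  then show ?thesis
    using assms unfolding net_fixed_eqs_def by (metis mult_eq_0_iff power_not_zero right_minus_eq)
qed

lemma beta_star_eq:
  "beta_star p1 p2 \<gamma> =
    (\<gamma> * (net_root p1 p2 \<gamma> - 2 * p2) / ((\<gamma> - 1) * net_root p1 p2 \<gamma>),
     (2 * \<gamma> * p1 - net_root p1 p2 \<gamma>) / ((\<gamma> - 1) * net_root p1 p2 \<gamma>))"
proof -
  have "sqrt (p1 * p2) * Delta p1 p2 \<gamma> = sqrt (net_disc p1 p2 \<gamma>)"
    unfolding Delta_def net_disc_def real_sqrt_mult[symmetric]
    by (simp add: algebra_simps power2_eq_square)
  then show ?thesis
    unfolding beta_star_def net_root_def Let_def by (simp add: algebra_simps)
qed

lemma net_fixed_eqs_interior_root:
  fixes p1 p2 \<gamma> a b :: real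
  assumes "0 \<le> p1" "p1 < 1" "0 \<le> p2" "p2 < 1" "\<not> (p1 = 0 \<and> p2 = 0)"
    and "net_fixed_eqs p1 p2 \<gamma> a b" "a \<in> {1<..<\<gamma>}" "b \<in> {1<..<\<gamma>}"
  shows "interior_cond p1 p2 \<gamma> \<and>
    (a, b) = (2 * \<gamma> * p2 / net_root p1 p2 \<gamma>, 2 * \<gamma> * p1 / net_root p1 p2 \<gamma>)"
proof -
  have "1 < \<gamma>"
    using assms(7) by simp
  have ab: "p1 * a = p2 * b"
    using net_fixed_eqs_interior_proportional assms(6,7) by auto
  have p: "0 < p1" "0 < p2"
  proof -
    have "p1 = 0 \<longleftrightarrow> p2 = 0"
      using ab assms(7,8) by auto
    then show "0 < p1" "0 < p2"
      using assms(1,3,5) by auto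
  qed
  define E where "E = 2 * \<gamma> * p2 / a"
  have E_alt: "E = 2 * \<gamma> * p1 / b"
    using ab assms(7,8) unfolding E_def by (auto simp: field_simps)
  have ab_E: "a = 2 * \<gamma> * p2 / E" "b = 2 * \<gamma> * p1 / E"
    using assms(7,8) p ab by (auto simp: E_def E_alt field_simps)
  have E_bounds_a: "2 * p2 < E" "E < 2 * \<gamma> * p2"
    using assms(7) p unfolding E_def by (auto simp: field_simps)
  have E_bounds_b: "2 * p1 < E" "E < 2 * \<gamma> * p1"
    using assms(8) p unfolding E_alt by (auto simp: field_simps)
  note E_bounds = E_bounds_a E_bounds_b
  from E_bounds have "interior_cond p1 p2 \<gamma>"
    using interior_cond_iff p by auto
  moreover have "E = net_root p1 p2 \<gamma>"
    unfolding net_root_def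
  proof (rule power2_eq_imp_eq_plus_sqrt)
    show "(E - (\<gamma> + 1) * p1 * p2)\<^sup>2 = net_disc p1 p2 \<gamma>"
      using net_fixed_eqs_param_iff[of E \<gamma> p1 p2] assms(6) E_bounds p \<open>1 < \<gamma>\<close>
      unfolding ab_E by auto
    show "(2 * p1 - (\<gamma> + 1) * p1 * p2)\<^sup>2 < net_disc p1 p2 \<gamma>"
      using net_disc_bounds assms(1-4) \<open>interior_cond p1 p2 \<gamma>\<close> by blast
  qed (use E_bounds in auto)
  ultimately show ?thesis
    using ab_E by simp
qed

lemma net_fixed_eqs_net_root:
  fixes p1 p2 \<gamma> :: real
  assumes "0 \<le> p1" "p1 < 1" "0 \<le> p2" "p2 < 1" "interior_cond p1 p2 \<gamma>"
  shows "net_fixed_eqs p1 p2 \<gamma> (2 * \<gamma> * p2 / net_root p1 p2 \<gamma>) (2 * \<gamma> * p1 / net_root p1 p2 \<gamma>)"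
proof (subst net_fixed_eqs_param_iff)
  have "0 \<le> net_disc p1 p2 \<gamma>"
    using net_disc_bounds(1)[OF assms] by (meson le_less_trans less_imp_le zero_le_power2)
  then show "(net_root p1 p2 \<gamma> - (\<gamma> + 1) * p1 * p2)\<^sup>2 = net_disc p1 p2 \<gamma>"
    unfolding net_root_def by simp
  show "net_root p1 p2 \<gamma> \<noteq> 0" "\<gamma> \<noteq> 0"
    using net_root_bounds[OF assms] assms interior_cond_iff by auto
qed

lemma net_fixed_eqs_iff:
  fixes p1 p2 \<gamma> a b :: real
  assumes "0 \<le> p1" "p1 < 1" "0 \<le> p2" "p2 < 1" "\<not> (p1 = 0 \<and> p2 = 0)" "1 < \<gamma>"
    and "a \<in> {1..\<gamma>}" "b \<in> {1..\<gamma>}"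
  shows "net_fixed_eqs p1 p2 \<gamma> a b \<longleftrightarrow> (a, b) = (\<gamma>, 1) \<or> (a, b) = (1, \<gamma>) \<or>
    interior_cond p1 p2 \<gamma> \<and>
      (a, b) = (2 * \<gamma> * p2 / net_root p1 p2 \<gamma>, 2 * \<gamma> * p1 / net_root p1 p2 \<gamma>)"
proof
  assume eqs: "net_fixed_eqs p1 p2 \<gamma> a b"
  show "(a, b) = (\<gamma>, 1) \<or> (a, b) = (1, \<gamma>) \<or> interior_cond p1 p2 \<gamma> \<and>
      (a, b) = (2 * \<gamma> * p2 / net_root p1 p2 \<gamma>, 2 * \<gamma> * p1 / net_root p1 p2 \<gamma>)"
  proof (cases "a \<in> {1, \<gamma>} \<or> b \<in> {1, \<gamma>}")
    case True
    then show ?thesis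
      using net_fixed_eqs_corner[OF eqs] assms by auto
  next
    case False
    with assms(7,8) have "a \<in> {1<..<\<gamma>}" "b \<in> {1<..<\<gamma>}"
      by auto
    then show ?thesis
      using net_fixed_eqs_interior_root[OF assms(1-5) eqs] by blast
  qed
next
  show "net_fixed_eqs p1 p2 \<gamma> a b"
    if "(a, b) = (\<gamma>, 1) \<or> (a, b) = (1, \<gamma>) \<or> interior_cond p1 p2 \<gamma> \<and>
      (a, b) = (2 * \<gamma> * p2 / net_root p1 p2 \<gamma>, 2 * \<gamma> * p1 / net_root p1 p2 \<gamma>)"
    using that net_fixed_eqs_net_root[OF assms(1-4)] by (auto simp: net_fixed_eqs_def)
qed

lemma beta_star_coords:
  fixes p1 p2 \<gamma> x y :: real
  assumes "0 \<le> p1" "p1 < 1" "0 \<le> p2" "p2 < 1" "1 < \<gamma>" "interior_cond p1 p2 \<gamma>"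
  shows "(\<gamma> - (\<gamma> - 1) * x, 1 + (\<gamma> - 1) * y) =
      (2 * \<gamma> * p2 / net_root p1 p2 \<gamma>, 2 * \<gamma> * p1 / net_root p1 p2 \<gamma>) \<longleftrightarrow>
    (x, y) = beta_star p1 p2 \<gamma>"
proof -
  have "0 < net_root p1 p2 \<gamma>"
    using net_root_bounds(1)[OF assms(1-4,6)] assms(1) by linarith
  with assms(5) show ?thesis
    unfolding beta_star_eq by (auto simp: field_simps)
qed

lemma beta_star_mem:
  fixes p1 p2 \<gamma> :: real
  assumes "0 \<le> p1" "p1 < 1" "0 \<le> p2" "p2 < 1" "1 < \<gamma>" "interior_cond p1 p2 \<gamma>"
  shows "beta_star p1 p2 \<gamma> \<in> {0..1} \<times> {0..1}"
  using net_root_bounds[OF assms(1-4,6)] assms(1,3,5)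
  unfolding beta_star_eq by (auto simp: field_simps)

lemma Fnet_fixed_point_iff:
  fixes p1 p2 \<gamma> x y :: real
  assumes "0 \<le> p1" "p1 < 1" "0 \<le> p2" "p2 < 1" "\<not> (p1 = 0 \<and> p2 = 0)" "1 < \<gamma>"
    and "x \<in> {0..1}" "y \<in> {0..1}"
  shows "Fnet p1 p2 \<gamma> (x, y) = (x, y) \<longleftrightarrow> (x, y) = (0, 0) \<or> (x, y) = (1, 1) \<or>
    interior_cond p1 p2 \<gamma> \<and> (x, y) = beta_star p1 p2 \<gamma>"
proof -
  let ?a = "\<gamma> - (\<gamma> - 1) * x" and ?b = "1 + (\<gamma> - 1) * y"
  have "(\<gamma> - 1) * x \<in> {0..\<gamma> - 1}" "(\<gamma> - 1) * y \<in> {0..\<gamma> - 1}"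
    using assms(6-8) by (auto intro: mult_left_le)
  then have ab: "?a \<in> {1..\<gamma>}" "?b \<in> {1..\<gamma>}"
    unfolding atLeastAtMost_iff by linarith+
  have "?a = 1 \<longleftrightarrow> (\<gamma> - 1) * (1 - x) = 0" "?b = \<gamma> \<longleftrightarrow> (\<gamma> - 1) * (1 - y) = 0"
    by (auto simp: algebra_simps)
  with assms(6) have corners:
    "(?a, ?b) = (\<gamma>, 1) \<longleftrightarrow> (x, y) = (0, 0)" "(?a, ?b) = (1, \<gamma>) \<longleftrightarrow> (x, y) = (1, 1)"
    by auto
  have "Fnet p1 p2 \<gamma> (x, y) = (x, y) \<longleftrightarrow> net_fixed_eqs p1 p2 \<gamma> ?a ?b"
    using Fnet_fixed_iff assms by simp
  also have "\<dots> \<longleftrightarrow> (?a, ?b) = (\<gamma>, 1) \<or> (?a, ?b) = (1, \<gamma>) \<or> interior_cond p1 p2 \<gamma> \<and>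
      (?a, ?b) = (2 * \<gamma> * p2 / net_root p1 p2 \<gamma>, 2 * \<gamma> * p1 / net_root p1 p2 \<gamma>)"
    using net_fixed_eqs_iff[OF assms(1-6) ab] .
  also have "\<dots> \<longleftrightarrow> (x, y) = (0, 0) \<or> (x, y) = (1, 1) \<or>
      interior_cond p1 p2 \<gamma> \<and> (x, y) = beta_star p1 p2 \<gamma>"
    unfolding corners using beta_star_coords[OF assms(1-4,6)] by blast
  finally show ?thesis .
qed

theorem proposition4:
  fixes p1 p2 \<gamma> :: real
  assumes "0 \<le> p1" "p1 < 1" "0 \<le> p2" "p2 < 1" "\<not> (p1 = 0 \<and> p2 = 0)" "\<gamma> > 1"
  shows "{\<beta> \<in> {0..1} \<times> {0..1}. Fnet p1 p2 \<gamma> \<beta> = \<beta>} =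
           {(0, 0), (1, 1)} \<union> (if interior_cond p1 p2 \<gamma> then {beta_star p1 p2 \<gamma>} else {})"
  using Fnet_fixed_point_iff[OF assms] beta_star_mem[OF assms(1-4,6)]
  by (auto simp: set_eq_iff)

end
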